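(* Let $(G,H)$ be a discrete Hecke pair which has a finite generating set $S$. If $(G,H)$ is of subexponential growth (with respect to a length function $l$ on $(G,H)$), then $(G,H)$ is relatively unimodular, i.e. $L(g)=R(g)$ for all $g\in G$.
   Context: A discrete Hecke pair is a group $G$ with a subgroup $H$ such that $L(x):=[H:H\cap xHx^{-1}]<\infty$ for all $x$; $R(x):=L(x^{-1})$; relatively unimodular means $L(g)/R(g)=1$ for all $g$. $S\subseteq G$ generates $(G,H)$ if $H\backslash G=\bigcup_nH\hat S^n$, $\hat S=S\cup S^{-1}\cup\{e\}$. A length function on $(G,H)$ is $l:G\to[0,\infty)$ with $l(e)=0$, $l(g)=l(g^{-1})$, $l(gh)\le l(g)+l(h)$ and $l|_H=0$; its growth function is $\mathcal G_l(r)=\#\{Hx\in H\backslash G: l(x)\le r\}$, and $(G,H)$ has subexponential growth with respect to $l$ if $\mathcal G_l(r)<\infty$ for all $r$ and $\lim_{r\to\infty}\frac{\ln\mathcal G_l(r)}{r}=0$. *)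

theory Defs
  imports "HOL-Analysis.Analysis" "HOL-Algebra.Algebra"
begin

definition conj_set :: "('a, 'b) monoid_scheme \<Rightarrow> 'a \<Rightarrow> 'a set \<Rightarrow> 'a set" where
  "conj_set G x H = (\<lambda>h. x \<otimes>\<^bsub>G\<^esub> h \<otimes>\<^bsub>G\<^esub> inv\<^bsub>G\<^esub> x) ` H"

definition hecke_cosets :: "('a, 'b) monoid_scheme \<Rightarrow> 'a set \<Rightarrow> 'a \<Rightarrow> 'a set set" where
  "hecke_cosets G H x = rcosets\<^bsub>G\<lparr>carrier := H\<rparr>\<^esub> (H \<inter> conj_set G x H)"

definition hecke_L :: "('a, 'b) monoid_scheme \<Rightarrow> 'a set \<Rightarrow> 'a \<Rightarrow> nat" where
  "hecke_L G H x = card (hecke_cosets G H x)"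

definition hecke_R :: "('a, 'b) monoid_scheme \<Rightarrow> 'a set \<Rightarrow> 'a \<Rightarrow> nat" where
  "hecke_R G H x = hecke_L G H (inv\<^bsub>G\<^esub> x)"

definition hecke_pair :: "('a, 'b) monoid_scheme \<Rightarrow> 'a set \<Rightarrow> bool" where
  "hecke_pair G H \<longleftrightarrow> group G \<and> subgroup H G \<and>
     (\<forall>x\<in>carrier G. finite (hecke_cosets G H x))"

definition relatively_unimodular :: "('a, 'b) monoid_scheme \<Rightarrow> 'a set \<Rightarrow> bool" where
  "relatively_unimodular G H \<longleftrightarrow>
     (\<forall>g\<in>carrier G. real (hecke_L G H g) / real (hecke_R G H g) = 1)"

definition sym_hat :: "('a, 'b) monoid_scheme \<Rightarrow> 'a set \<Rightarrow> 'a set" where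
  "sym_hat G S = S \<union> (\<lambda>s. inv\<^bsub>G\<^esub> s) ` S \<union> {\<one>\<^bsub>G\<^esub>}"

fun set_pow :: "('a, 'b) monoid_scheme \<Rightarrow> 'a set \<Rightarrow> nat \<Rightarrow> 'a set" where
  "set_pow G A 0 = {\<one>\<^bsub>G\<^esub>}"
| "set_pow G A (Suc n) = set_mult G (set_pow G A n) A"

definition generates_pair :: "('a, 'b) monoid_scheme \<Rightarrow> 'a set \<Rightarrow> 'a set \<Rightarrow> bool" where
  "generates_pair G H S \<longleftrightarrow> S \<subseteq> carrier G \<and>
     carrier G = (\<Union>n. set_mult G H (set_pow G (sym_hat G S) n))"

definition length_function :: "('a, 'b) monoid_scheme \<Rightarrow> 'a set \<Rightarrow> ('a \<Rightarrow> real) \<Rightarrow> bool" where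
  "length_function G H l \<longleftrightarrow>
     (\<forall>g\<in>carrier G. l g \<ge> 0) \<and> l \<one>\<^bsub>G\<^esub> = 0 \<and>
     (\<forall>g\<in>carrier G. l (inv\<^bsub>G\<^esub> g) = l g) \<and>
     (\<forall>g\<in>carrier G. \<forall>h\<in>carrier G. l (g \<otimes>\<^bsub>G\<^esub> h) \<le> l g + l h) \<and>
     (\<forall>h\<in>H. l h = 0)"

definition growth_set :: "('a, 'b) monoid_scheme \<Rightarrow> 'a set \<Rightarrow> ('a \<Rightarrow> real) \<Rightarrow> real \<Rightarrow> 'a set set" where
  "growth_set G H l r = {H #>\<^bsub>G\<^esub> x | x. x \<in> carrier G \<and> l x \<le> r}"

definition growth_fun :: "('a, 'b) monoid_scheme \<Rightarrow> 'a set \<Rightarrow> ('a \<Rightarrow> real) \<Rightarrow> real \<Rightarrow> nat" where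
  "growth_fun G H l r = card (growth_set G H l r)"

definition subexp_growth :: "('a, 'b) monoid_scheme \<Rightarrow> 'a set \<Rightarrow> ('a \<Rightarrow> real) \<Rightarrow> bool" where
  "subexp_growth G H l \<longleftrightarrow> (\<forall>r. finite (growth_set G H l r)) \<and>
     ((\<lambda>r. ln (real (growth_fun G H l r)) / r) \<longlongrightarrow> 0) at_top"

end

theory Submission
  imports Defs "HOL-Library.Equipollence"
begin

text \<open>
  The modular function \<open>\<Delta>(g) = L(g) / R(g)\<close> is a homomorphism into the positive reals: the
  subgroup \<open>K = H \<inter> xHx\<inverse> \<inter> xyH(xy)\<inverse>\<close> has finite index in each of the three conjugates of
  \<open>H\<close>, and each of \<open>\<Delta>(x)\<close>, \<open>\<Delta>(y)\<close>, \<open>\<Delta>(xy)\<close> is a ratio of two of these indices.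
  On the other hand \<open>R(g)\<close> counts the cosets \<open>Hgh\<close> with \<open>h \<in> H\<close>, all of length at most \<open>l(g)\<close>.
  So if \<open>\<Delta>(g) < 1\<close>, then at least \<open>R(g^n) \<ge> \<Delta>(g)^(-n)\<close> cosets have length at most \<open>n l(g)\<close>,
  and the growth is exponential. Hence \<open>\<Delta> \<ge> 1\<close>, and \<open>\<Delta>(g\<inverse>) = 1 / \<Delta>(g)\<close> forces \<open>\<Delta> = 1\<close>.
\<close>

lemma card_eq_if_eqpoll: "A \<approx> B \<Longrightarrow> card A = card B"
  unfolding eqpoll_def using bij_betw_same_card by blast

lemma image_eqpoll_if_same_kernel:
  assumes "\<And>x y. x \<in> A \<Longrightarrow> y \<in> A \<Longrightarrow> F x = F y \<longleftrightarrow> F' x = F' y"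
  shows "F ` A \<approx> F' ` A"
proof -
  have F'_inv_into: "F' (inv_into A F (F a)) = F' a" if "a \<in> A" for a
    using assms that inv_into_into[of "F a" F A] f_inv_into_f[of "F a" F A] by auto
  have "bij_betw (\<lambda>z. F' (inv_into A F z)) (F ` A) (F' ` A)"
  proof (rule bij_betw_imageI)
    show "inj_on (\<lambda>z. F' (inv_into A F z)) (F ` A)"
      using assms F'_inv_into by (auto simp: inj_on_def)
    show "(\<lambda>z. F' (inv_into A F z)) ` F ` A = F' ` A"
      using F'_inv_into by (auto simp: image_image)
  qed
  then show ?thesis unfolding eqpoll_def by blast
qed

lemma card_image_eq_mult_fibres:
  assumes coarser: "\<And>x y. x \<in> A \<Longrightarrow> y \<in> A \<Longrightarrow> F x = F y \<Longrightarrow> P x = P y"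
    and "finite (P ` A)"
    and fibre_finite: "\<And>a. a \<in> A \<Longrightarrow> finite (F ` {x \<in> A. P x = P a})"
    and fibre_card: "\<And>a. a \<in> A \<Longrightarrow> card (F ` {x \<in> A. P x = P a}) = c"
  shows "finite (F ` A)" and "card (F ` A) = card (P ` A) * c"
proof -
  let ?fibre = "\<lambda>Y. F ` {x \<in> A. P x = Y}"
  have decomp: "F ` A = (\<Union>Y\<in>P ` A. ?fibre Y)" by auto
  show "finite (F ` A)" unfolding decomp using assms(2) fibre_finite by blast
  have disjoint: "?fibre Y \<inter> ?fibre Z = {}" if "Y \<noteq> Z" for Y Z
    using coarser that by blast
  have "card (F ` A) = (\<Sum>Y\<in>P ` A. card (?fibre Y))"
    unfolding decomp using assms(2) fibre_finite disjoint by (subst card_UN_disjoint) auto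
  also have "\<dots> = (\<Sum>Y\<in>P ` A. c)" using fibre_card by (intro sum.cong) auto
  finally show "card (F ` A) = card (P ` A) * c" by simp
qed

lemma not_subexponential_if_exponential_lower_bound:
  fixes F :: "real \<Rightarrow> real"
  assumes "\<rho> > 1" "c \<ge> 0" and bound: "\<And>n. \<rho> ^ n \<le> F (real n * c)"
  shows "\<not> ((\<lambda>r. ln (F r) / r) \<longlongrightarrow> 0) at_top"
proof
  assume lim: "((\<lambda>r. ln (F r) / r) \<longlongrightarrow> 0) at_top"
  show False
  proof (cases "c = 0")
    case True
    obtain n where "F 0 < \<rho> ^ n" using real_arch_pow[OF \<open>\<rho> > 1\<close>] by blast
    then show False using bound[of n] True by simp
  next
    case False
    then have "c > 0" using \<open>c \<ge> 0\<close> by simp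
    have "filterlim (\<lambda>n. real n * c) at_top sequentially"
      using \<open>c > 0\<close> filterlim_real_sequentially by (rule filterlim_at_top_mult_tendsto_pos[OF tendsto_const])
    then have "(\<lambda>n. ln (F (real n * c)) / (real n * c)) \<longlonglongrightarrow> 0"
      by (rule filterlim_compose[OF lim])
    moreover have "ln \<rho> / c \<le> ln (F (real n * c)) / (real n * c)" if "n \<ge> 1" for n
    proof -
      have "ln \<rho> / c = ln (\<rho> ^ n) / (real n * c)"
        using that \<open>\<rho> > 1\<close> by (simp add: ln_realpow)
      also have "\<dots> \<le> ln (F (real n * c)) / (real n * c)"
        using that \<open>\<rho> > 1\<close> \<open>c > 0\<close> bound[of n] by (intro divide_right_mono ln_mono) auto
      finally show ?thesis .
    qed
    ultimately have "ln \<rho> / c \<le> 0"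
      by (intro tendsto_lowerbound[of _ 0 sequentially]) (auto simp: eventually_sequentially)
    then show False using \<open>\<rho> > 1\<close> \<open>c > 0\<close> by (simp add: divide_le_0_iff)
  qed
qed

text \<open>
  For \<open>K \<subseteq> A\<close> these are the right cosets of \<open>K\<close> in \<open>A\<close>, so their number is the index \<open>[A : K]\<close>.
\<close>
definition rcosets_met :: "('a, 'b) monoid_scheme \<Rightarrow> 'a set \<Rightarrow> 'a set \<Rightarrow> 'a set set" where
  "rcosets_met G A K = (\<lambda>a. K #>\<^bsub>G\<^esub> a) ` A"

context group
begin

lemma rcos_eq_iff:
  assumes "subgroup K G" "a \<in> carrier G" "b \<in> carrier G"
  shows "K #> a = K #> b \<longleftrightarrow> a \<otimes> inv b \<in> K"
  using subgroup.rcos_module[OF assms(1) is_group assms(3,2)] assms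
  by (metis rcos_self repr_independence)

lemma rcosets_met_nonempty: "subgroup A G \<Longrightarrow> rcosets_met G A K \<noteq> {}"
  unfolding rcosets_met_def using subgroup.one_closed by blast

lemma rcosets_met_Int_eqpoll:
  assumes "subgroup B G" "subgroup C G"
  shows "rcosets_met G B (B \<inter> C) \<approx> rcosets_met G B C"
  unfolding rcosets_met_def
proof (rule image_eqpoll_if_same_kernel)
  fix a b assume "a \<in> B" "b \<in> B"
  then have carrier: "a \<in> carrier G" "b \<in> carrier G" and "a \<otimes> inv b \<in> B"
    using assms(1) subgroup.mem_carrier subgroup.m_closed subgroup.m_inv_closed by metis+
  moreover have "subgroup (B \<inter> C) G" using assms subgroups_Inter_pair by blast
  ultimately show "(B \<inter> C) #> a = (B \<inter> C) #> b \<longleftrightarrow> C #> a = C #> b"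
    using rcos_eq_iff[OF _ carrier] assms(2) by blast
qed

lemma rcosets_met_tower:
  assumes "subgroup A G" "subgroup B G" "subgroup K G" "K \<subseteq> B" "B \<subseteq> A"
    and "finite (rcosets_met G A B)" "finite (rcosets_met G B K)"
  shows "finite (rcosets_met G A K)"
    and "card (rcosets_met G A K) = card (rcosets_met G A B) * card (rcosets_met G B K)"
proof -
  have carrier: "x \<in> carrier G" if "x \<in> A" for x
    using that by (rule subgroup.mem_carrier[OF assms(1)])
  have fibre: "(#>) K ` {x \<in> A. B #> x = B #> a} \<approx> rcosets_met G B K" if "a \<in> A" for a
  proof -
    have a: "a \<in> carrier G" using carrier that .
    have "{x \<in> A. B #> x = B #> a} = (\<lambda>b. b \<otimes> a) ` B"
    proof (intro equalityI subsetI)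
      fix x assume x: "x \<in> {x \<in> A. B #> x = B #> a}"
      then have "x \<otimes> inv a \<in> B"
        using rcos_eq_iff[OF assms(2) carrier carrier] \<open>a \<in> A\<close> by blast
      moreover have "x = (x \<otimes> inv a) \<otimes> a"
        using x carrier \<open>a \<in> A\<close> by (simp add: m_assoc)
      ultimately show "x \<in> (\<lambda>b. b \<otimes> a) ` B" by (rule rev_image_eqI)
    next
      fix x assume "x \<in> (\<lambda>b. b \<otimes> a) ` B"
      then obtain b where b: "b \<in> B" "x = b \<otimes> a" by (rule imageE)
      then have "x \<in> A"
        using assms(5) \<open>a \<in> A\<close> subgroup.m_closed[OF assms(1)] by auto
      moreover have "x \<otimes> inv a = b"
        using b assms(5) carrier \<open>a \<in> A\<close> by (auto simp: m_assoc)
      ultimately show "x \<in> {x \<in> A. B #> x = B #> a}"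
        using rcos_eq_iff[OF assms(2) carrier carrier] \<open>a \<in> A\<close> b(1) by simp
    qed
    moreover have "(\<lambda>b. K #> (b \<otimes> a)) ` B \<approx> rcosets_met G B K"
      unfolding rcosets_met_def
    proof (rule image_eqpoll_if_same_kernel)
      fix x y assume "x \<in> B" "y \<in> B"
      then have xy: "x \<in> carrier G" "y \<in> carrier G" using assms(5) carrier by auto
      have "(x \<otimes> a) \<otimes> inv (y \<otimes> a) = x \<otimes> inv y"
        using xy a by (simp add: inv_mult_group m_assoc) (simp add: m_assoc[symmetric])
      then show "K #> (x \<otimes> a) = K #> (y \<otimes> a) \<longleftrightarrow> K #> x = K #> y"
        using rcos_eq_iff[OF assms(3)] xy carrier \<open>a \<in> A\<close> by simp
    qed
    ultimately show ?thesis by (simp add: image_image)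
  qed
  have coarser: "B #> x = B #> y" if "x \<in> A" "y \<in> A" "K #> x = K #> y" for x y
  proof -
    have "x \<otimes> inv y \<in> K"
      using that rcos_eq_iff[OF assms(3) carrier carrier] by simp
    then show ?thesis
      using that assms(4) rcos_eq_iff[OF assms(2) carrier carrier] by auto
  qed
  have fibre_finite: "finite ((#>) K ` {x \<in> A. B #> x = B #> a})"
    and fibre_card: "card ((#>) K ` {x \<in> A. B #> x = B #> a}) = card (rcosets_met G B K)"
    if "a \<in> A" for a
    using fibre[OF that] assms(7) eqpoll_finite_iff card_eq_if_eqpoll by auto
  have "finite ((#>) B ` A)" using assms(6) by (simp add: rcosets_met_def)
  note fibres = card_image_eq_mult_fibres[of A "(#>) K" "(#>) B", OF coarser this fibre_finite fibre_card]
  show "finite (rcosets_met G A K)"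
    using fibres(1) unfolding rcosets_met_def .
  show "card (rcosets_met G A K) = card (rcosets_met G A B) * card (rcosets_met G B K)"
    using fibres(2) unfolding rcosets_met_def .
qed

lemma card_rcosets_met_Int3:
  assumes "subgroup A G" "subgroup B G" "subgroup D G"
    and "finite (rcosets_met G A (A \<inter> B))" "finite (rcosets_met G A (A \<inter> D))"
  shows "card (rcosets_met G A (A \<inter> B \<inter> D))
           = card (rcosets_met G A (A \<inter> B)) * card (rcosets_met G (A \<inter> B) (A \<inter> B \<inter> D))"
    and "card (rcosets_met G (A \<inter> B) (A \<inter> B \<inter> D)) > 0"
proof -
  have AB: "subgroup (A \<inter> B) G" and ABD: "subgroup (A \<inter> B \<inter> D) G"
    using assms subgroups_Inter_pair by blast+
  have "finite (rcosets_met G A D)"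
    using assms(5) rcosets_met_Int_eqpoll[OF assms(1,3)] eqpoll_finite_iff by blast
  then have "finite (rcosets_met G (A \<inter> B) D)"
    by (rule finite_subset[rotated]) (auto simp: rcosets_met_def)
  then have finite_ABD: "finite (rcosets_met G (A \<inter> B) (A \<inter> B \<inter> D))"
    using rcosets_met_Int_eqpoll[OF AB assms(3)] eqpoll_finite_iff by blast
  show "card (rcosets_met G A (A \<inter> B \<inter> D))
          = card (rcosets_met G A (A \<inter> B)) * card (rcosets_met G (A \<inter> B) (A \<inter> B \<inter> D))"
    using rcosets_met_tower(2)[OF assms(1) AB ABD _ _ assms(4) finite_ABD] by blast
  show "card (rcosets_met G (A \<inter> B) (A \<inter> B \<inter> D)) > 0"
    using finite_ABD rcosets_met_nonempty[OF AB] by (simp add: card_gt_0_iff)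
qed

lemma conj_set_eq_cosets: "conj_set G x K = x <# K #> inv x"
  unfolding conj_set_def l_coset_def r_coset_def by auto

lemma subgroup_conj_set: "subgroup K G \<Longrightarrow> x \<in> carrier G \<Longrightarrow> subgroup (conj_set G x K) G"
  unfolding conj_set_eq_cosets by (rule subgroup_conjugation_is_surj2)

lemma conj_set_subset: "K \<subseteq> carrier G \<Longrightarrow> x \<in> carrier G \<Longrightarrow> conj_set G x K \<subseteq> carrier G"
  unfolding conj_set_def by auto

lemma conj_set_mem_iff:
  assumes "K \<subseteq> carrier G" "x \<in> carrier G" "u \<in> carrier G"
  shows "u \<in> conj_set G x K \<longleftrightarrow> inv x \<otimes> u \<otimes> x \<in> K"
proof
  assume "u \<in> conj_set G x K"
  then obtain h where "h \<in> K" "u = x \<otimes> h \<otimes> inv x" unfolding conj_set_def by blast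
  then show "inv x \<otimes> u \<otimes> x \<in> K"
    using assms by (simp add: m_assoc subsetD) (simp add: m_assoc[symmetric] subsetD)
next
  assume "inv x \<otimes> u \<otimes> x \<in> K"
  moreover have "u = x \<otimes> (inv x \<otimes> u \<otimes> x) \<otimes> inv x"
    using assms by (simp add: m_assoc) (simp add: m_assoc[symmetric])
  ultimately show "u \<in> conj_set G x K" unfolding conj_set_def by blast
qed

lemma conj_set_conj_set:
  assumes "K \<subseteq> carrier G" "x \<in> carrier G" "y \<in> carrier G"
  shows "conj_set G x (conj_set G y K) = conj_set G (x \<otimes> y) K"
  unfolding conj_set_def image_image
  using assms by (intro image_cong) (auto simp: inv_mult_group m_assoc)

lemma conj_set_Int:
  assumes "A \<subseteq> carrier G" "B \<subseteq> carrier G" "x \<in> carrier G"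
  shows "conj_set G x (A \<inter> B) = conj_set G x A \<inter> conj_set G x B"
proof -
  have "inj_on (\<lambda>h. x \<otimes> h \<otimes> inv x) (carrier G)"
    using assms(3) by (auto simp: inj_on_def)
  then show ?thesis unfolding conj_set_def using assms(1,2) by (rule inj_on_image_Int)
qed

lemma rcosets_met_conj_set:
  assumes "subgroup A G" "subgroup K G" "x \<in> carrier G"
  shows "rcosets_met G (conj_set G x A) (conj_set G x K) \<approx> rcosets_met G A K"
proof -
  have "rcosets_met G (conj_set G x A) (conj_set G x K)
          = (\<lambda>a. conj_set G x K #> (x \<otimes> a \<otimes> inv x)) ` A"
    by (simp add: rcosets_met_def conj_set_def image_image)
  also have "\<dots> \<approx> rcosets_met G A K"
    unfolding rcosets_met_def
  proof (rule image_eqpoll_if_same_kernel)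
    fix a b assume "a \<in> A" "b \<in> A"
    then have ab: "a \<in> carrier G" "b \<in> carrier G"
      using subgroup.mem_carrier[OF assms(1)] by auto
    have "(x \<otimes> a \<otimes> inv x) \<otimes> inv (x \<otimes> b \<otimes> inv x) = x \<otimes> (a \<otimes> inv b) \<otimes> inv x"
      using ab assms(3) by (simp add: inv_mult_group m_assoc) (simp add: m_assoc[symmetric])
    moreover have "x \<otimes> (a \<otimes> inv b) \<otimes> inv x \<in> conj_set G x K \<longleftrightarrow> a \<otimes> inv b \<in> K"
      using ab assms(3) subgroup.mem_carrier[OF assms(2)] by (auto simp: conj_set_def)
    ultimately show "conj_set G x K #> (x \<otimes> a \<otimes> inv x) = conj_set G x K #> (x \<otimes> b \<otimes> inv x)
                       \<longleftrightarrow> K #> a = K #> b"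
      using rcos_eq_iff[OF subgroup_conj_set[OF assms(2,3)]] rcos_eq_iff[OF assms(2)] ab assms(3)
      by simp
  qed
  finally show ?thesis .
qed

end

lemma hecke_cosets_eq_rcosets_met: "hecke_cosets G H x = rcosets_met G H (H \<inter> conj_set G x H)"
  unfolding hecke_cosets_def rcosets_met_def RCOSETS_def r_coset_def by auto

definition hecke_modular :: "('a, 'b) monoid_scheme \<Rightarrow> 'a set \<Rightarrow> 'a \<Rightarrow> real" where
  "hecke_modular G H x = real (hecke_L G H x) / real (hecke_R G H x)"

lemma (in group) length_function_pow:
  assumes "length_function G H l" "g \<in> carrier G"
  shows "l (g [^] n) \<le> real n * l g"
proof (induction n)
  case 0
  then show ?case using assms(1) by (simp add: length_function_def)
next
  case (Suc n)
  have "l (g [^] Suc n) \<le> l (g [^] n) + l g"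
    using assms by (simp add: length_function_def nat_pow_Suc)
  then show ?case using Suc by (simp add: algebra_simps)
qed

locale hecke = group +
  fixes H
  assumes subgroup_H: "subgroup H G"
    and finite_hecke_cosets: "x \<in> carrier G \<Longrightarrow> finite (hecke_cosets G H x)"
begin

lemma H_subset_carrier: "H \<subseteq> carrier G"
  using subgroup_H by (rule subgroup.subset)

lemma hecke_L_pos: "x \<in> carrier G \<Longrightarrow> 0 < hecke_L G H x"
  unfolding hecke_L_def using finite_hecke_cosets rcosets_met_nonempty[OF subgroup_H]
  by (simp add: hecke_cosets_eq_rcosets_met card_gt_0_iff)

lemma hecke_R_pos: "x \<in> carrier G \<Longrightarrow> 0 < hecke_R G H x"
  unfolding hecke_R_def by (simp add: hecke_L_pos)

lemma hecke_modular_pos: "x \<in> carrier G \<Longrightarrow> 0 < hecke_modular G H x"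
  unfolding hecke_modular_def by (simp add: hecke_L_pos hecke_R_pos)

lemma hecke_modular_inv: "x \<in> carrier G \<Longrightarrow> hecke_modular G H (inv x) = 1 / hecke_modular G H x"
  unfolding hecke_modular_def hecke_R_def by simp

lemma rcosets_met_conj_set_H:
  assumes "a \<in> carrier G" "b \<in> carrier G"
  shows "finite (rcosets_met G (conj_set G a H) (conj_set G a H \<inter> conj_set G b H))"
    and "card (rcosets_met G (conj_set G a H) (conj_set G a H \<inter> conj_set G b H))
           = hecke_L G H (inv a \<otimes> b)"
proof -
  have ab: "inv a \<otimes> b \<in> carrier G" using assms by simp
  have "conj_set G a H \<inter> conj_set G b H = conj_set G a (H \<inter> conj_set G (inv a \<otimes> b) H)"
    using assms conj_set_Int[OF H_subset_carrier conj_set_subset[OF H_subset_carrier ab] assms(1)]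
      conj_set_conj_set[OF H_subset_carrier assms(1) ab]
    by (simp add: m_assoc[symmetric])
  moreover have "subgroup (H \<inter> conj_set G (inv a \<otimes> b) H) G"
    using subgroup_H subgroup_conj_set[OF subgroup_H ab] by (rule subgroups_Inter_pair)
  ultimately have "rcosets_met G (conj_set G a H) (conj_set G a H \<inter> conj_set G b H)
                     \<approx> hecke_cosets G H (inv a \<otimes> b)"
    using rcosets_met_conj_set[OF subgroup_H _ assms(1)] by (simp add: hecke_cosets_eq_rcosets_met)
  then show "finite (rcosets_met G (conj_set G a H) (conj_set G a H \<inter> conj_set G b H))"
    and "card (rcosets_met G (conj_set G a H) (conj_set G a H \<inter> conj_set G b H))
           = hecke_L G H (inv a \<otimes> b)"
    using finite_hecke_cosets[OF ab] eqpoll_finite_iff card_eq_if_eqpoll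
    unfolding hecke_L_def by blast+
qed

lemma hecke_modular_eq_index_ratio:
  assumes "a \<in> carrier G" "b \<in> carrier G" "d \<in> carrier G"
    and K: "K = conj_set G a H \<inter> conj_set G b H \<inter> conj_set G d H"
  shows "hecke_modular G H (inv a \<otimes> b)
           = real (card (rcosets_met G (conj_set G a H) K)) / real (card (rcosets_met G (conj_set G b H) K))"
    and "0 < card (rcosets_met G (conj_set G b H) K)"
proof -
  let ?A = "conj_set G a H" and ?B = "conj_set G b H" and ?D = "conj_set G d H"
  have subgroups: "subgroup ?A G" "subgroup ?B G" "subgroup ?D G"
    using subgroup_conj_set[OF subgroup_H] assms(1-3) by auto
  note finite = rcosets_met_conj_set_H(1)
  have A: "card (rcosets_met G ?A K) = hecke_L G H (inv a \<otimes> b) * card (rcosets_met G (?A \<inter> ?B) K)"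
    and pos: "0 < card (rcosets_met G (?A \<inter> ?B) K)"
    using card_rcosets_met_Int3[OF subgroups finite[OF assms(1,2)] finite[OF assms(1,3)]] K
    by (simp_all add: rcosets_met_conj_set_H(2)[OF assms(1,2)])
  have "card (rcosets_met G ?B (?A \<inter> ?B)) = hecke_R G H (inv a \<otimes> b)"
    using rcosets_met_conj_set_H(2)[OF assms(2,1)] assms
    by (simp add: Int_commute hecke_R_def inv_mult_group)
  moreover have "?B \<inter> ?A = ?A \<inter> ?B" "?B \<inter> ?A \<inter> ?D = K" using K by blast+
  ultimately have B: "card (rcosets_met G ?B K) = hecke_R G H (inv a \<otimes> b) * card (rcosets_met G (?A \<inter> ?B) K)"
    using card_rcosets_met_Int3(1)[OF subgroups(2,1,3) finite[OF assms(2,1)] finite[OF assms(2,3)]]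
    by simp
  show "hecke_modular G H (inv a \<otimes> b)
          = real (card (rcosets_met G ?A K)) / real (card (rcosets_met G ?B K))"
    unfolding A B hecke_modular_def using pos by simp
  show "0 < card (rcosets_met G ?B K)"
    unfolding B using pos hecke_R_pos assms by simp
qed

lemma hecke_modular_mult:
  assumes x: "x \<in> carrier G" and y: "y \<in> carrier G"
  shows "hecke_modular G H (x \<otimes> y) = hecke_modular G H x * hecke_modular G H y"
proof -
  have xy: "x \<otimes> y \<in> carrier G" using x y by simp
  define K where "K = conj_set G \<one> H \<inter> conj_set G x H \<inter> conj_set G (x \<otimes> y) H"
  define index where "index z = real (card (rcosets_met G (conj_set G z H) K))" for z
  have "hecke_modular G H x = index \<one> / index x" and "index x \<noteq> 0"
    using hecke_modular_eq_index_ratio[OF one_closed x xy K_def] x unfolding index_def by auto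
  moreover have "hecke_modular G H y = index x / index (x \<otimes> y)"
    using hecke_modular_eq_index_ratio(1)[OF x xy one_closed, of K] x y
    unfolding index_def K_def by (simp add: m_assoc[symmetric] Int_ac)
  moreover have "hecke_modular G H (x \<otimes> y) = index \<one> / index (x \<otimes> y)"
    using hecke_modular_eq_index_ratio(1)[OF one_closed xy x, of K] xy
    unfolding index_def K_def by (simp add: Int_ac)
  ultimately show ?thesis by simp
qed

lemma hecke_modular_pow: "x \<in> carrier G \<Longrightarrow> hecke_modular G H (x [^] n) = hecke_modular G H x ^ n"
proof (induction n)
  case 0
  then show ?case unfolding hecke_modular_def hecke_R_def using hecke_L_pos[of \<one>] by simp
next
  case (Suc n)
  then show ?case by (simp add: nat_pow_Suc hecke_modular_mult)
qed

lemma hecke_R_eq_card_double_coset: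
  assumes "g \<in> carrier G"
  shows "hecke_R G H g = card ((\<lambda>h. H #> (g \<otimes> h)) ` H)"
proof -
  let ?K = "H \<inter> conj_set G (inv g) H"
  have "subgroup ?K G"
    using subgroup_H subgroup_conj_set[OF subgroup_H] assms by (simp add: subgroups_Inter_pair)
  have "(\<lambda>h. H #> (g \<otimes> h)) ` H \<approx> rcosets_met G H ?K"
    unfolding rcosets_met_def
  proof (rule image_eqpoll_if_same_kernel)
    fix a b assume "a \<in> H" "b \<in> H"
    then have ab: "a \<in> carrier G" "b \<in> carrier G" and "a \<otimes> inv b \<in> H"
      using H_subset_carrier subgroup.m_closed[OF subgroup_H] subgroup.m_inv_closed[OF subgroup_H]
      by auto
    moreover have "(g \<otimes> a) \<otimes> inv (g \<otimes> b) = g \<otimes> (a \<otimes> inv b) \<otimes> inv g"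
      using ab assms by (simp add: inv_mult_group m_assoc)
    moreover have "g \<otimes> (a \<otimes> inv b) \<otimes> inv g \<in> H \<longleftrightarrow> a \<otimes> inv b \<in> conj_set G (inv g) H"
      using conj_set_mem_iff[OF H_subset_carrier, of "inv g" "a \<otimes> inv b"] ab assms by simp
    ultimately show "H #> (g \<otimes> a) = H #> (g \<otimes> b) \<longleftrightarrow> ?K #> a = ?K #> b"
      using rcos_eq_iff[OF subgroup_H] rcos_eq_iff[OF \<open>subgroup ?K G\<close>] assms by simp
  qed
  then show ?thesis
    unfolding hecke_R_def hecke_L_def hecke_cosets_eq_rcosets_met
    by (simp add: card_eq_if_eqpoll)
qed

lemma hecke_R_le_growth_fun:
  assumes "length_function G H l" "finite (growth_set G H l r)" "g \<in> carrier G" "l g \<le> r"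
  shows "hecke_R G H g \<le> growth_fun G H l r"
proof -
  have "(\<lambda>h. H #> (g \<otimes> h)) ` H \<subseteq> growth_set G H l r"
  proof
    fix Z assume "Z \<in> (\<lambda>h. H #> (g \<otimes> h)) ` H"
    then obtain h where h: "h \<in> H" "Z = H #> (g \<otimes> h)" by blast
    moreover have "h \<in> carrier G" using h(1) H_subset_carrier by blast
    ultimately have "l (g \<otimes> h) \<le> l g + l h" "l h = 0"
      using assms(1,3) unfolding length_function_def by blast+
    then show "Z \<in> growth_set G H l r"
      unfolding growth_set_def using h assms(3,4) H_subset_carrier by force
  qed
  then show ?thesis
    unfolding hecke_R_eq_card_double_coset[OF assms(3)] growth_fun_def
    using assms(2) by (rule card_mono[rotated])
qed

lemma hecke_R_pow_lower_bound:
  assumes "g \<in> carrier G"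
  shows "(1 / hecke_modular G H g) ^ n \<le> real (hecke_R G H (g [^] n))"
proof -
  have gn: "g [^] n \<in> carrier G" using assms by simp
  have "real (hecke_R G H (g [^] n)) = real (hecke_L G H (g [^] n)) / hecke_modular G H (g [^] n)"
    using hecke_R_pos[OF gn] hecke_L_pos[OF gn] by (simp add: hecke_modular_def)
  also have "\<dots> = real (hecke_L G H (g [^] n)) * (1 / hecke_modular G H g) ^ n"
    by (simp add: hecke_modular_pow[OF assms] power_one_over)
  also have "\<dots> \<ge> (1 / hecke_modular G H g) ^ n"
    using hecke_L_pos[OF gn] hecke_modular_pos[OF assms] by simp
  finally show ?thesis .
qed

lemma hecke_modular_ge_one:
  assumes "length_function G H l" "subexp_growth G H l" "g \<in> carrier G"
  shows "1 \<le> hecke_modular G H g"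
proof (rule ccontr)
  assume "\<not> 1 \<le> hecke_modular G H g"
  then have "1 < 1 / hecke_modular G H g" using hecke_modular_pos[OF assms(3)] by simp
  moreover have "0 \<le> l g" using assms(1,3) by (simp add: length_function_def)
  moreover have "(1 / hecke_modular G H g) ^ n \<le> real (growth_fun G H l (real n * l g))" for n
  proof -
    have "hecke_R G H (g [^] n) \<le> growth_fun G H l (real n * l g)"
      using assms length_function_pow[OF assms(1,3)]
      by (intro hecke_R_le_growth_fun) (auto simp: subexp_growth_def)
    then show ?thesis using hecke_R_pow_lower_bound[OF assms(3), of n] by linarith
  qed
  ultimately have "\<not> ((\<lambda>r. ln (real (growth_fun G H l r)) / r) \<longlongrightarrow> 0) at_top"
    by (rule not_subexponential_if_exponential_lower_bound)
  then show False using assms(2) by (simp add: subexp_growth_def)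
qed

end

theorem proposition4p6:
  fixes G :: "('a, 'b) monoid_scheme" and H S :: "'a set" and l :: "'a \<Rightarrow> real"
  assumes "hecke_pair G H"
    and "finite S" and "generates_pair G H S"
    and "length_function G H l"
    and "subexp_growth G H l"
  shows "relatively_unimodular G H"
proof -
  interpret hecke G H
    using assms(1) unfolding hecke_pair_def by (simp add: hecke.intro hecke_axioms.intro)
  have "hecke_modular G H g = 1" if "g \<in> carrier G" for g
  proof -
    have "1 \<le> hecke_modular G H g" "1 \<le> hecke_modular G H (inv\<^bsub>G\<^esub> g)"
      using hecke_modular_ge_one[OF assms(4,5)] that by simp_all
    then show ?thesis
      using hecke_modular_inv[OF that] hecke_modular_pos[OF that] by (simp add: le_divide_eq)
  qed
  then show ?thesis unfolding relatively_unimodular_def hecke_modular_def by blast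
qed

end
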